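(* The discrete self-adjoint Dirac system $y_{k+1}(z)=(I_m+\mathrm{i} z j C_k)y_k(z)$ $(k\in\mathbb{N}_0)$, whose potential satisfies $C_k>0$, $C_k j C_k=j$, is uniquely recovered (i.e., the sequence $\{C_k\}$ is uniquely determined) from its Weyl function $\varphi(z)$, $z\in\mathbb{C}_-$.
   Context: Let $j=\mathrm{diag}\{I_{m_1},-I_{m_2}\}$ with $m_1+m_2=m$, $m_1,m_2\neq 0$. Consider the discrete self-adjoint Dirac system $y_{k+1}(z)=(I_m+\mathrm{i} z j C_k)y_k(z)$, $k\in\mathbb{N}_0$, where the $m\times m$ matrices $C_k$ satisfy $C_k>0$ and $C_k j C_k=j$. Let $\{W_k(z)\}$ be its fundamental solution normalized by $W_0(z)=I_m$, and let $q(z)=(1+|z|^2)^{-1}$. The Weyl function of the system is the $m_1\times m_2$ matrix function $\varphi(z)$ on the lower half-plane $\mathbb{C}_-$ such that $\sum_{k=0}^\infty q(z)^k \begin{bmatrix}\varphi(z)^* & I_{m_2}\end{bmatrix} W_k(z)^* C_k W_k(z)\begin{bmatrix}\varphi(z)\\ I_{m_2}\end{bmatrix}<\infty$ for $z\in\mathbb{C}_-$. (Such a Weyl function exists, is unique, and is analytic and contractive on $\mathbb{C}_-$.) *)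

theory Defs
  imports Complex_Main "Jordan_Normal_Form.Matrix"
begin

definition cadj :: "complex mat \<Rightarrow> complex mat" where
  "cadj A = mat (dim_col A) (dim_row A) (\<lambda>(i,k). cnj (A $$ (k,i)))"

definition pos_def_mat :: "nat \<Rightarrow> complex mat \<Rightarrow> bool" where
  "pos_def_mat n C \<longleftrightarrow> C \<in> carrier_mat n n \<and> cadj C = C \<and>
     (\<forall>v \<in> carrier_vec n. v \<noteq> 0\<^sub>v n \<longrightarrow>
        0 < Re (\<Sum>i<n. cnj (v $ i) * (C *\<^sub>v v) $ i))"

definition jmat :: "nat \<Rightarrow> nat \<Rightarrow> complex mat" where
  "jmat m1 m2 = four_block_mat (1\<^sub>m m1) (0\<^sub>m m1 m2) (0\<^sub>m m2 m1) (- 1\<^sub>m m2)"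

definition dirac_potential :: "nat \<Rightarrow> nat \<Rightarrow> (nat \<Rightarrow> complex mat) \<Rightarrow> bool" where
  "dirac_potential m1 m2 C \<longleftrightarrow>
     (\<forall>k. pos_def_mat (m1 + m2) (C k) \<and> C k * jmat m1 m2 * C k = jmat m1 m2)"

fun fund_sol :: "nat \<Rightarrow> nat \<Rightarrow> (nat \<Rightarrow> complex mat) \<Rightarrow> complex \<Rightarrow> nat \<Rightarrow> complex mat" where
  "fund_sol m1 m2 C z 0 = 1\<^sub>m (m1 + m2)"
| "fund_sol m1 m2 C z (Suc k) =
     (1\<^sub>m (m1 + m2) + (\<i> * z) \<cdot>\<^sub>m (jmat m1 m2 * C k)) * fund_sol m1 m2 C z k"

definition qfun :: "complex \<Rightarrow> real" where
  "qfun z = 1 / (1 + (cmod z)\<^sup>2)"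

text \<open>The k-th summand q(z)^k [phi^* I] W_k^* C_k W_k [phi; I] (an m2 x m2 matrix).\<close>
definition weyl_term :: "nat \<Rightarrow> nat \<Rightarrow> (nat \<Rightarrow> complex mat) \<Rightarrow> complex mat \<Rightarrow> complex \<Rightarrow> nat \<Rightarrow> complex mat" where
  "weyl_term m1 m2 C \<phi> z k =
     (let P = four_block_mat \<phi> (0\<^sub>m m1 0) (1\<^sub>m m2) (0\<^sub>m m2 0);
          W = fund_sol m1 m2 C z k
      in complex_of_real (qfun z ^ k) \<cdot>\<^sub>m (cadj P * cadj W * C k * W * P))"

definition is_weyl_function :: "nat \<Rightarrow> nat \<Rightarrow> (nat \<Rightarrow> complex mat) \<Rightarrow> (complex \<Rightarrow> complex mat) \<Rightarrow> bool" where
  "is_weyl_function m1 m2 C \<phi> \<longleftrightarrow>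
     (\<forall>z. Im z < 0 \<longrightarrow> \<phi> z \<in> carrier_mat m1 m2 \<and>
        (\<forall>a < m2. \<forall>b < m2. summable (\<lambda>k. weyl_term m1 m2 C (\<phi> z) z k $$ (a, b))))"

end

theory Submission
  imports Defs "Jordan_Normal_Form.Matrix_Kernel"
begin

text \<open>Induction on \<open>n\<close>: if \<open>C\<close> and \<open>C'\<close> agree below \<open>n\<close>, they have the same fundamental solution
  \<open>W\<^sub>n\<close>. An admissible matrix \<open>D\<close> (\<open>D > 0\<close>, \<open>D j D = j\<close>) is determined by the kernel of \<open>D + j\<close>, so
  it suffices to show that \<open>C\<^sub>n + j\<close> and \<open>C'\<^sub>n + j\<close> have the same kernel.

  Along a solution \<open>y\<^sub>k = W\<^sub>k y\<^sub>0\<close>, the sequence \<open>q(z)\<^sup>k \<langle>y\<^sub>k, j y\<^sub>k\<rangle>\<close> is nondecreasing for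
  \<open>z \<in> \<complex>\<^sub>-\<close> and dominated by the \<open>k\<close>-th term of the Weyl series; so on Weyl vectors
  \<open>y\<^sub>0 = [\<phi>(z); I] x\<close> it is nonpositive for all \<open>k\<close>. These \<open>j\<close>-negative vectors \<open>W\<^sub>n y\<^sub>0\<close> can have
  any prescribed lower half, and the inequality at step \<open>n + 1\<close> with \<open>z = -\<i> t\<close>, \<open>t \<down> 1\<close>, forces
  them to lie, up to \<open>O((t - 1)\<^sup>2)\<close>, in the kernel of \<open>C\<^sub>n + j\<close>. Since the Weyl vectors at step \<open>n\<close>
  are the same for \<open>C\<close> and \<open>C'\<close>, a vector of one kernel is a limit of approximate vectors of the
  other.\<close>

lemma scalar_prod_lessThan: "u \<bullet> v = (\<Sum>i<dim_vec v. u $ i * v $ i)"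
  unfolding scalar_prod_def by (simp add: lessThan_atLeast0)

lemma mult_mat_vec_index_sum:
  "A \<in> carrier_mat n k \<Longrightarrow> v \<in> carrier_vec k \<Longrightarrow> i < n \<Longrightarrow> (A *\<^sub>v v) $ i = (\<Sum>j<k. A $$ (i, j) * v $ j)"
  by (simp add: scalar_prod_lessThan)

lemma mult_mat_vec_carrier_vec [simp]: "dim_row A = n \<Longrightarrow> A *\<^sub>v v \<in> carrier_vec n"
  unfolding carrier_vec_def by simp

lemma mult_mat_vec_zero_vec: "A \<in> carrier_mat n k \<Longrightarrow> A *\<^sub>v 0\<^sub>v k = 0\<^sub>v n"
  by auto

lemma smult_mat_mult_vec:
  "A \<in> carrier_mat n k \<Longrightarrow> v \<in> carrier_vec k \<Longrightarrow> (c \<cdot>\<^sub>m A) *\<^sub>v v = c \<cdot>\<^sub>v (A *\<^sub>v v)"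
  by (intro eq_vecI) (auto simp: scalar_prod_lessThan sum_distrib_left ac_simps)

lemma add_eq_0_vec_iff:
  fixes a b :: "'a :: ab_group_add vec"
  shows "a \<in> carrier_vec n \<Longrightarrow> b \<in> carrier_vec n \<Longrightarrow> a + b = 0\<^sub>v n \<longleftrightarrow> a = - b"
  by (auto simp: vec_eq_iff add_eq_0_iff)

lemma diff_eq_0_vec_iff:
  fixes a b :: "'a :: ab_group_add vec"
  shows "a \<in> carrier_vec n \<Longrightarrow> b \<in> carrier_vec n \<Longrightarrow> a - b = 0\<^sub>v n \<longleftrightarrow> a = b"
  by (auto simp: vec_eq_iff)

lemma col_eq_mult_unit_vec:
  fixes A :: "'a :: semiring_1 mat"
  assumes "A \<in> carrier_mat n k" "j < k"
  shows "col A j = A *\<^sub>v unit_vec k j"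
  using col_mult2[of A n k "1\<^sub>m k" k j] assms by simp

lemma mat_eq_if_mult_vec_eq:
  fixes A B :: "'a :: semiring_1 mat"
  assumes A: "A \<in> carrier_mat n k" and B: "B \<in> carrier_mat n k"
    and eq: "\<And>v. v \<in> carrier_vec k \<Longrightarrow> A *\<^sub>v v = B *\<^sub>v v"
  shows "A = B"
proof (rule mat_col_eqI)
  fix j assume "j < dim_col B"
  then show "col A j = col B j"
    using A B eq[of "unit_vec k j"] col_eq_mult_unit_vec[OF A] col_eq_mult_unit_vec[OF B] by simp
qed (use A B in auto)

lemma mult_mat_vec_surj_if_inj:
  fixes B :: "'a :: field mat"
  assumes B: "B \<in> carrier_mat n n"
    and inj: "\<And>x. x \<in> carrier_vec n \<Longrightarrow> B *\<^sub>v x = 0\<^sub>v n \<Longrightarrow> x = 0\<^sub>v n"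
    and b: "b \<in> carrier_vec n"
  shows "\<exists>x \<in> carrier_vec n. B *\<^sub>v x = b"
proof
  have det: "det B \<noteq> 0"
    using det_0_iff_vec_prod_zero[OF B] inj by blast
  have adj: "adj_mat B \<in> carrier_mat n n" using adj_mat(1)[OF B] .
  define x where "x = (1 / det B) \<cdot>\<^sub>v (adj_mat B *\<^sub>v b)"
  show "x \<in> carrier_vec n" unfolding x_def using adj by simp
  have "B *\<^sub>v x = (1 / det B) \<cdot>\<^sub>v ((B * adj_mat B) *\<^sub>v b)"
    unfolding x_def using B adj b by (simp add: mult_mat_vec)
  also have "\<dots> = b"
    unfolding adj_mat(2)[OF B] using det b by (auto simp: vec_eq_iff)
  finally show "B *\<^sub>v x = b" .
qed

lemma index_cadj [simp]:
  "i < dim_col A \<Longrightarrow> k < dim_row A \<Longrightarrow> cadj A $$ (i, k) = cnj (A $$ (k, i))"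
  unfolding cadj_def by simp

lemma dim_cadj [simp]: "dim_row (cadj A) = dim_col A" "dim_col (cadj A) = dim_row A"
  unfolding cadj_def by auto

lemma cadj_carrier_mat [simp]: "A \<in> carrier_mat n k \<Longrightarrow> cadj A \<in> carrier_mat k n"
  unfolding carrier_mat_def by auto

lemma cadj_cadj [simp]: "cadj (cadj A) = A"
  by (intro eq_matI) auto

lemma cadj_add: "A \<in> carrier_mat n k \<Longrightarrow> B \<in> carrier_mat n k \<Longrightarrow> cadj (A + B) = cadj A + cadj B"
  by (intro eq_matI) auto

section \<open>The sesquilinear form\<close>

definition cinner :: "complex vec \<Rightarrow> complex vec \<Rightarrow> complex" where
  "cinner u v = (\<Sum>i<dim_vec u. cnj (u $ i) * v $ i)"

abbreviation qform :: "complex mat \<Rightarrow> complex vec \<Rightarrow> real" where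
  "qform A u \<equiv> Re (cinner u (A *\<^sub>v u))"

lemma cinner_add_left:
  "u \<in> carrier_vec n \<Longrightarrow> v \<in> carrier_vec n \<Longrightarrow> cinner (u + v) w = cinner u w + cinner v w"
  unfolding cinner_def by (simp add: distrib_right sum.distrib)

lemma cinner_add_right:
  "u \<in> carrier_vec n \<Longrightarrow> v \<in> carrier_vec n \<Longrightarrow> w \<in> carrier_vec n \<Longrightarrow>
    cinner u (v + w) = cinner u v + cinner u w"
  unfolding cinner_def by (simp add: distrib_left sum.distrib)

lemma cinner_diff_left:
  "u \<in> carrier_vec n \<Longrightarrow> v \<in> carrier_vec n \<Longrightarrow> cinner (u - v) w = cinner u w - cinner v w"
  unfolding cinner_def by (simp add: left_diff_distrib sum_subtractf)

lemma cinner_diff_right: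
  "u \<in> carrier_vec n \<Longrightarrow> v \<in> carrier_vec n \<Longrightarrow> w \<in> carrier_vec n \<Longrightarrow>
    cinner u (v - w) = cinner u v - cinner u w"
  unfolding cinner_def by (simp add: right_diff_distrib sum_subtractf)

lemma cinner_smult_left: "cinner (c \<cdot>\<^sub>v u) v = cnj c * cinner u v"
  unfolding cinner_def by (simp add: sum_distrib_left ac_simps)

lemma cinner_smult_right: "dim_vec v = dim_vec u \<Longrightarrow> cinner u (c \<cdot>\<^sub>v v) = c * cinner u v"
  unfolding cinner_def by (simp add: sum_distrib_left ac_simps)

lemma cinner_zero_left [simp]: "cinner (0\<^sub>v n) u = 0"
  unfolding cinner_def by simp

lemma cnj_mult_self: "cnj z * z = complex_of_real ((cmod z)\<^sup>2)"
  by (subst complex_norm_square) (simp add: mult.commute)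

lemma Re_cinner_self: "Re (cinner u u) = (\<Sum>i<dim_vec u. (cmod (u $ i))\<^sup>2)"
  unfolding cinner_def cnj_mult_self by simp

lemma cinner_self_nonpos_imp_zero:
  assumes "Re (cinner u u) \<le> 0" shows "u = 0\<^sub>v (dim_vec u)"
proof -
  have "(\<Sum>i<dim_vec u. (cmod (u $ i))\<^sup>2) = 0"
    using assms unfolding Re_cinner_self by (intro antisym sum_nonneg) auto
  then show ?thesis
    by (intro eq_vecI) (auto simp: sum_nonneg_eq_0_iff)
qed

lemma cinner_add_smult_add_smult:
  assumes "a \<in> carrier_vec n" "b \<in> carrier_vec n" "e \<in> carrier_vec n" "f \<in> carrier_vec n"
  shows "cinner (a + c \<cdot>\<^sub>v b) (e + c \<cdot>\<^sub>v f) =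
    cinner a e + c * cinner a f + cnj c * cinner b e + cnj c * c * cinner b f"
  using assms
  by (simp add: cinner_add_left[of _ n] cinner_add_right[of _ n] cinner_smult_left cinner_smult_right
      algebra_simps)

lemma cinner_mult_mat_vec_expand:
  assumes "A \<in> carrier_mat n n" "x \<in> carrier_vec n"
  shows "cinner x (A *\<^sub>v x) = (\<Sum>a<n. \<Sum>b<n. cnj (x $ a) * A $$ (a, b) * x $ b)"
  unfolding cinner_def using assms by (simp add: scalar_prod_lessThan sum_distrib_left ac_simps)

lemma cinner_mult_mat_vec_right:
  assumes A: "A \<in> carrier_mat n k" and u: "u \<in> carrier_vec n" and v: "v \<in> carrier_vec k"
  shows "cinner u (A *\<^sub>v v) = cinner (cadj A *\<^sub>v u) v"
proof -
  have "cinner u (A *\<^sub>v v) = (\<Sum>i<n. \<Sum>j<k. cnj (u $ i) * A $$ (i, j) * v $ j)"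
    unfolding cinner_def using A u v by (simp add: scalar_prod_lessThan sum_distrib_left ac_simps)
  also have "\<dots> = (\<Sum>j<k. \<Sum>i<n. cnj (u $ i) * A $$ (i, j) * v $ j)"
    by (rule sum.swap)
  also have "\<dots> = cinner (cadj A *\<^sub>v u) v"
    unfolding cinner_def using A u v by (simp add: scalar_prod_lessThan sum_distrib_left ac_simps)
  finally show ?thesis .
qed

lemma cinner_hermitian:
  "A \<in> carrier_mat n n \<Longrightarrow> cadj A = A \<Longrightarrow> u \<in> carrier_vec n \<Longrightarrow> v \<in> carrier_vec n \<Longrightarrow>
    cinner u (A *\<^sub>v v) = cinner (A *\<^sub>v u) v"
  using cinner_mult_mat_vec_right by metis

lemma qform_add:
  "A \<in> carrier_mat n n \<Longrightarrow> B \<in> carrier_mat n n \<Longrightarrow> u \<in> carrier_vec n \<Longrightarrow>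
    qform (A + B) u = qform A u + qform B u"
  by (simp add: add_mult_distrib_mat_vec cinner_add_right[of _ n])

lemma cinner_diff_kernel:
  assumes G: "G \<in> carrier_mat n n" "cadj G = G" and y: "y \<in> carrier_vec n" and w: "w \<in> carrier_vec n"
    and Gy: "G *\<^sub>v y = 0\<^sub>v n"
  shows "cinner (y - w) (G *\<^sub>v (y - w)) = cinner w (G *\<^sub>v w)"
proof -
  have Gw: "G *\<^sub>v w \<in> carrier_vec n" using G(1) by simp
  have "G *\<^sub>v (y - w) = - (G *\<^sub>v w)"
    using mult_minus_distrib_mat_vec[OF G(1) y w] Gy Gw by (auto simp: vec_eq_iff)
  moreover have "cinner y (G *\<^sub>v w) = 0"
    using cinner_hermitian[OF G y w] Gy by simp
  moreover have "cinner (y - w) (- (G *\<^sub>v w)) = - cinner (y - w) (G *\<^sub>v w)"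
    unfolding cinner_def sum_negf[symmetric] by (rule sum.cong) (use y w carrier_vecD[OF Gw] in auto)
  ultimately show ?thesis using cinner_diff_left[OF y w] by simp
qed

lemma cinner_parallelogram:
  assumes G: "G \<in> carrier_mat n n" and a: "a \<in> carrier_vec n" and b: "b \<in> carrier_vec n"
  shows "cinner (a + b) (G *\<^sub>v (a + b)) + cinner (a - b) (G *\<^sub>v (a - b)) =
    2 * cinner a (G *\<^sub>v a) + 2 * cinner b (G *\<^sub>v b)"
  using a b G unfolding mult_add_distrib_mat_vec[OF G a b] mult_minus_distrib_mat_vec[OF G a b] cinner_def
  by (simp add: sum.distrib sum_subtractf algebra_simps)

definition entry_norm :: "complex mat \<Rightarrow> real" where
  "entry_norm A = (\<Sum>a<dim_row A. \<Sum>b<dim_col A. cmod (A $$ (a, b)))"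

lemma entry_norm_nonneg: "0 \<le> entry_norm A"
  unfolding entry_norm_def by (simp add: sum_nonneg)

lemma abs_qform_le:
  assumes A: "A \<in> carrier_mat n n" and u: "u \<in> carrier_vec n"
  shows "\<bar>qform A u\<bar> \<le> entry_norm A * Re (cinner u u)"
proof -
  define N where "N = Re (cinner u u)"
  have N: "N = (\<Sum>i<n. (cmod (u $ i))\<^sup>2)" unfolding N_def Re_cinner_self using u by simp
  have sq: "(cmod (u $ a))\<^sup>2 \<le> N" if "a < n" for a
    unfolding N using that by (intro member_le_sum) auto
  have prod: "cmod (u $ a) * cmod (u $ b) \<le> N" if "a < n" "b < n" for a b
    using sum_squares_bound[of "cmod (u $ a)" "cmod (u $ b)"] sq[OF that(1)] sq[OF that(2)] by simp
  have "\<bar>qform A u\<bar> \<le> cmod (\<Sum>a<n. \<Sum>b<n. cnj (u $ a) * A $$ (a, b) * u $ b)"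
    unfolding cinner_mult_mat_vec_expand[OF A u] by (rule abs_Re_le_cmod)
  also have "\<dots> \<le> (\<Sum>a<n. \<Sum>b<n. cmod (A $$ (a, b)) * (cmod (u $ a) * cmod (u $ b)))"
    by (intro order_trans[OF norm_sum] sum_mono order_trans[OF norm_sum]) (simp add: norm_mult)
  also have "\<dots> \<le> (\<Sum>a<n. \<Sum>b<n. cmod (A $$ (a, b)) * N)"
    using prod by (intro sum_mono mult_left_mono) auto
  also have "\<dots> = entry_norm A * N"
    unfolding entry_norm_def using A by (simp add: sum_distrib_right)
  finally show ?thesis unfolding N_def .
qed

section \<open>The signature matrix \<open>j\<close>\<close>

lemma jmat_carrier [simp]: "jmat m1 m2 \<in> carrier_mat (m1 + m2) (m1 + m2)"
  by (simp add: jmat_def)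

lemma jmat_dims [simp]: "dim_row (jmat m1 m2) = m1 + m2" "dim_col (jmat m1 m2) = m1 + m2"
  by (simp_all add: jmat_def)

lemma jmat_index:
  "i < m1 + m2 \<Longrightarrow> k < m1 + m2 \<Longrightarrow> jmat m1 m2 $$ (i, k) = (if i = k then if i < m1 then 1 else -1 else 0)"
  unfolding jmat_def by (auto simp: index_mat_four_block)

lemma cadj_jmat [simp]: "cadj (jmat m1 m2) = jmat m1 m2"
  by (intro eq_matI) (auto simp: jmat_def jmat_index)

lemma jmat_mult_vec_index:
  assumes "v \<in> carrier_vec (m1 + m2)" "i < m1 + m2"
  shows "(jmat m1 m2 *\<^sub>v v) $ i = (if i < m1 then v $ i else - v $ i)"
proof -
  have "(jmat m1 m2 *\<^sub>v v) $ i = (\<Sum>k<m1 + m2. if k = i then (if i < m1 then v $ i else - v $ i) else 0)"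
    unfolding mult_mat_vec_index_sum[OF jmat_carrier assms]
    by (rule sum.cong) (use assms(2) in \<open>auto simp: jmat_index\<close>)
  then show ?thesis using assms(2) by simp
qed

lemma jmat_mult_vec_jmat_mult_vec [simp]:
  "v \<in> carrier_vec (m1 + m2) \<Longrightarrow> jmat m1 m2 *\<^sub>v (jmat m1 m2 *\<^sub>v v) = v"
proof (intro eq_vecI)
  fix i assume v: "v \<in> carrier_vec (m1 + m2)" and "i < dim_vec v"
  then have "i < m1 + m2" by simp
  then show "(jmat m1 m2 *\<^sub>v (jmat m1 m2 *\<^sub>v v)) $ i = v $ i"
    using jmat_mult_vec_index[OF v] jmat_mult_vec_index[OF mult_mat_vec_carrier[OF jmat_carrier v]]
    by (simp del: index_mult_mat_vec)
qed simp

definition upper_sqnorm :: "nat \<Rightarrow> complex vec \<Rightarrow> real" where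
  "upper_sqnorm m1 u = (\<Sum>i<m1. (cmod (u $ i))\<^sup>2)"

definition lower_sqnorm :: "nat \<Rightarrow> nat \<Rightarrow> complex vec \<Rightarrow> real" where
  "lower_sqnorm m1 m2 u = (\<Sum>i\<in>{m1..<m1 + m2}. (cmod (u $ i))\<^sup>2)"

lemma upper_sqnorm_nonneg: "0 \<le> upper_sqnorm m1 u"
  unfolding upper_sqnorm_def by (simp add: sum_nonneg)

lemma lower_sqnorm_cong:
  assumes "\<And>i. i < m2 \<Longrightarrow> u $ (m1 + i) = v $ (m1 + i)"
  shows "lower_sqnorm m1 m2 u = lower_sqnorm m1 m2 v"
  unfolding lower_sqnorm_def
proof (rule sum.cong)
  fix i assume "i \<in> {m1..<m1 + m2}"
  then have "u $ i = v $ i" using assms[of "i - m1"] by auto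
  then show "(cmod (u $ i))\<^sup>2 = (cmod (v $ i))\<^sup>2" by simp
qed simp

lemma sum_lessThan_add_split: "(\<Sum>i<m1 + m2. f i) = (\<Sum>i<m1. f i) + (\<Sum>i\<in>{m1..<m1 + m2::nat}. f i)"
  by (simp add: lessThan_atLeast0 sum.atLeastLessThan_concat)

lemma Re_cinner_self_split:
  "u \<in> carrier_vec (m1 + m2) \<Longrightarrow> Re (cinner u u) = upper_sqnorm m1 u + lower_sqnorm m1 m2 u"
  unfolding Re_cinner_self upper_sqnorm_def lower_sqnorm_def by (simp add: sum_lessThan_add_split)

lemma qform_jmat:
  assumes u: "u \<in> carrier_vec (m1 + m2)"
  shows "qform (jmat m1 m2) u = upper_sqnorm m1 u - lower_sqnorm m1 m2 u"
proof -
  have "qform (jmat m1 m2) u = (\<Sum>i<m1 + m2. if i < m1 then (cmod (u $ i))\<^sup>2 else - (cmod (u $ i))\<^sup>2)"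
    unfolding cinner_def using u
    by (simp add: jmat_mult_vec_index cnj_mult_self if_distrib del: index_mult_mat_vec cong: if_cong)
  also have "\<dots> = upper_sqnorm m1 u - lower_sqnorm m1 m2 u"
    unfolding upper_sqnorm_def lower_sqnorm_def sum_lessThan_add_split
    by (simp add: sum_negf)
  finally show ?thesis .
qed

lemma qform_diff_jmat_le:
  assumes A: "A \<in> carrier_mat (m1 + m2) (m1 + m2)" and w: "w \<in> carrier_vec (m1 + m2)"
    and neg: "qform (jmat m1 m2) w \<le> 0"
  shows "qform A w - qform (jmat m1 m2) w \<le> (2 * entry_norm A + 1) * lower_sqnorm m1 m2 w"
proof -
  have "Re (cinner w w) \<le> 2 * lower_sqnorm m1 m2 w"
    using neg qform_jmat[OF w] Re_cinner_self_split[OF w] by simp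
  then have "qform A w \<le> entry_norm A * (2 * lower_sqnorm m1 m2 w)"
    using abs_qform_le[OF A w] entry_norm_nonneg[of A] by (smt (verit) mult_left_mono)
  moreover have "- qform (jmat m1 m2) w \<le> lower_sqnorm m1 m2 w"
    using qform_jmat[OF w] upper_sqnorm_nonneg[of m1 w] by simp
  ultimately show ?thesis by (simp add: algebra_simps)
qed

section \<open>Admissible potential values\<close>

locale admissible =
  fixes m1 m2 :: nat and D :: "complex mat"
  assumes carrier [simp]: "D \<in> carrier_mat (m1 + m2) (m1 + m2)"
    and hermitian: "cadj D = D"
    and positive: "\<And>v. v \<in> carrier_vec (m1 + m2) \<Longrightarrow> v \<noteq> 0\<^sub>v (m1 + m2) \<Longrightarrow> 0 < qform D v"
    and j_unitary: "D * jmat m1 m2 * D = jmat m1 m2"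

lemma dirac_potential_admissible: "dirac_potential m1 m2 C \<Longrightarrow> admissible m1 m2 (C k)"
  unfolding dirac_potential_def pos_def_mat_def admissible_def cinner_def by auto

context admissible
begin

abbreviation J :: "complex mat" where
  "J \<equiv> jmat m1 m2"

lemma dim_row_carrier [simp]: "dim_row D = m1 + m2" and dim_col_carrier [simp]: "dim_col D = m1 + m2"
  using carrier_matD[OF carrier] by auto

lemma qform_nonneg: "v \<in> carrier_vec (m1 + m2) \<Longrightarrow> 0 \<le> qform D v"
  using positive[of v] by (cases "v = 0\<^sub>v (m1 + m2)") auto

lemma qform_nonpos_imp_zero: "v \<in> carrier_vec (m1 + m2) \<Longrightarrow> qform D v \<le> 0 \<Longrightarrow> v = 0\<^sub>v (m1 + m2)"
  using positive[of v] by force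

lemma D_J_D_mult_vec: 
  assumes v: "v \<in> carrier_vec (m1 + m2)"
  shows "D *\<^sub>v (J *\<^sub>v (D *\<^sub>v v)) = J *\<^sub>v v"
proof -
  have "(D * J * D) *\<^sub>v v = D *\<^sub>v (J *\<^sub>v (D *\<^sub>v v))"
    using assoc_mult_mat_vec[OF mult_carrier_mat[OF carrier jmat_carrier] carrier v]
      assoc_mult_mat_vec[OF carrier jmat_carrier, of "D *\<^sub>v v"] by simp
  then show ?thesis unfolding j_unitary by simp
qed

lemma cinner_J_D_mult_vec:
  assumes u: "u \<in> carrier_vec (m1 + m2)"
  shows "cinner (J *\<^sub>v (D *\<^sub>v u)) (J *\<^sub>v u) = cinner u (D *\<^sub>v u)"
    and "cinner (J *\<^sub>v (D *\<^sub>v u)) (D *\<^sub>v u) = cinner u (J *\<^sub>v u)"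
proof -
  have Du: "D *\<^sub>v u \<in> carrier_vec (m1 + m2)" by simp
  show "cinner (J *\<^sub>v (D *\<^sub>v u)) (J *\<^sub>v u) = cinner u (D *\<^sub>v u)"
    using cinner_hermitian[OF jmat_carrier cadj_jmat Du, of "J *\<^sub>v u"]
      cinner_hermitian[OF carrier hermitian u u] u by simp
  show "cinner (J *\<^sub>v (D *\<^sub>v u)) (D *\<^sub>v u) = cinner u (J *\<^sub>v u)"
    using cinner_hermitian[OF jmat_carrier cadj_jmat Du Du]
      cinner_hermitian[OF carrier hermitian u, of "J *\<^sub>v (D *\<^sub>v u)"] D_J_D_mult_vec[OF u]
    by simp
qed

lemma cinner_transfer_step:
  fixes c :: complex
  assumes u: "u \<in> carrier_vec (m1 + m2)"
  defines "v \<equiv> u + c \<cdot>\<^sub>v (J *\<^sub>v (D *\<^sub>v u))"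
  shows "cinner v (D *\<^sub>v v) = (1 + cnj c * c) * cinner u (D *\<^sub>v u) + (c + cnj c) * cinner u (J *\<^sub>v u)"
    and "cinner v (J *\<^sub>v v) = (1 + cnj c * c) * cinner u (J *\<^sub>v u) + (c + cnj c) * cinner u (D *\<^sub>v u)"
proof -
  have JDu: "J *\<^sub>v (D *\<^sub>v u) \<in> carrier_vec (m1 + m2)" by simp
  have Dv: "D *\<^sub>v v = D *\<^sub>v u + c \<cdot>\<^sub>v (J *\<^sub>v u)"
    unfolding v_def using u JDu
    by (simp add: mult_add_distrib_mat_vec[of _ "m1 + m2" "m1 + m2"] mult_mat_vec[OF carrier JDu]
        D_J_D_mult_vec)
  have Jv: "J *\<^sub>v v = J *\<^sub>v u + c \<cdot>\<^sub>v (D *\<^sub>v u)"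
    unfolding v_def using u JDu
    by (simp add: mult_add_distrib_mat_vec[of _ "m1 + m2" "m1 + m2"] mult_mat_vec[OF jmat_carrier JDu])
  show "cinner v (D *\<^sub>v v) = (1 + cnj c * c) * cinner u (D *\<^sub>v u) + (c + cnj c) * cinner u (J *\<^sub>v u)"
    unfolding Dv unfolding v_def using u
    by (subst cinner_add_smult_add_smult[of _ "m1 + m2"]) (auto simp: cinner_J_D_mult_vec algebra_simps)
  show "cinner v (J *\<^sub>v v) = (1 + cnj c * c) * cinner u (J *\<^sub>v u) + (c + cnj c) * cinner u (D *\<^sub>v u)"
    unfolding Jv unfolding v_def using u
    by (subst cinner_add_smult_add_smult[of _ "m1 + m2"]) (auto simp: cinner_J_D_mult_vec algebra_simps)
qed

text \<open>Positivity of \<open>D\<close> at \<open>u \<mp> j D u\<close>.\<close>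

lemma qform_jmat_le: "u \<in> carrier_vec (m1 + m2) \<Longrightarrow> qform J u \<le> qform D u"
  using qform_nonneg[of "u + (-1) \<cdot>\<^sub>v (J *\<^sub>v (D *\<^sub>v u))"] cinner_transfer_step(1)[of u "-1"] by simp

lemma qform_add_jmat_nonneg: "u \<in> carrier_vec (m1 + m2) \<Longrightarrow> 0 \<le> qform D u + qform J u"
  using qform_nonneg[of "u + 1 \<cdot>\<^sub>v (J *\<^sub>v (D *\<^sub>v u))"] cinner_transfer_step(1)[of u 1] by simp

lemma qform_add_jmat_nonpos_imp:
  assumes u: "u \<in> carrier_vec (m1 + m2)" and le: "qform D u + qform J u \<le> 0"
  shows "D *\<^sub>v u + J *\<^sub>v u = 0\<^sub>v (m1 + m2)"
proof -
  define v where "v = u + 1 \<cdot>\<^sub>v (J *\<^sub>v (D *\<^sub>v u))"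
  have v: "v \<in> carrier_vec (m1 + m2)" unfolding v_def using u by simp
  have "qform D v \<le> 0" unfolding v_def using cinner_transfer_step(1)[OF u, of 1] le by simp
  then have "v = 0\<^sub>v (m1 + m2)" by (rule qform_nonpos_imp_zero[OF v])
  moreover have "J *\<^sub>v v = D *\<^sub>v u + J *\<^sub>v u"
    unfolding v_def using u
    by (simp add: mult_add_distrib_mat_vec[of _ "m1 + m2" "m1 + m2"] mult_mat_vec comm_add_vec[of _ "m1 + m2"])
  ultimately show ?thesis using mult_mat_vec_zero_vec[OF jmat_carrier] by simp
qed

text \<open>The identity \<open>(1 + t)\<^sup>2 (a + b) - (t - 1)\<^sup>2 (a - b) = 2 ((1 + t\<^sup>2) b + 2 t a)\<close> turns the Weyl
  inequality at \<open>z = -\<i> t\<close> into a bound of order \<open>(t - 1)\<^sup>2\<close>.\<close>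

lemma qform_add_jmat_le_sq:
  fixes t :: real
  assumes w: "w \<in> carrier_vec (m1 + m2)" and t: "0 \<le> t"
    and ineq: "(1 + t\<^sup>2) * qform J w + 2 * t * qform D w \<le> 0"
  shows "qform D w + qform J w \<le> (t - 1)\<^sup>2 * (qform D w - qform J w)"
proof -
  define S where "S = (1 + t)\<^sup>2 * (qform D w + qform J w)"
  define T where "T = (t - 1)\<^sup>2 * (qform D w - qform J w)"
  define R where "R = (1 + t\<^sup>2) * qform J w + 2 * t * qform D w"
  have "S - T = 2 * R"
    unfolding S_def T_def R_def by (simp add: algebra_simps power2_eq_square)
  moreover have "1 \<le> (1 + t)\<^sup>2"
    using t mult_nonneg_nonneg[OF t t] by (simp add: power2_eq_square algebra_simps)
  then have "qform D w + qform J w \<le> S"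
    unfolding S_def using mult_right_mono[OF _ qform_add_jmat_nonneg[OF w]] by fastforce
  moreover have "R \<le> 0" unfolding R_def by (rule ineq)
  ultimately show ?thesis unfolding T_def[symmetric] by linarith
qed

lemma qform_add_jmat_le_lower:
  fixes t :: real
  assumes w: "w \<in> carrier_vec (m1 + m2)" and t: "0 \<le> t" and neg: "qform J w \<le> 0"
    and ineq: "(1 + t\<^sup>2) * qform J w + 2 * t * qform D w \<le> 0"
  shows "qform (D + J) w \<le> (t - 1)\<^sup>2 * ((2 * entry_norm D + 1) * lower_sqnorm m1 m2 w)"
proof -
  have "qform (D + J) w \<le> (t - 1)\<^sup>2 * (qform D w - qform J w)"
    unfolding qform_add[OF carrier jmat_carrier w] by (rule qform_add_jmat_le_sq[OF w t ineq])
  also have "\<dots> \<le> (t - 1)\<^sup>2 * ((2 * entry_norm D + 1) * lower_sqnorm m1 m2 w)"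
    using qform_diff_jmat_le[OF carrier w neg] by (simp add: mult_left_mono)
  finally show ?thesis .
qed

lemma transfer_step_eq_zero_imp:
  fixes c :: complex
  assumes v: "v \<in> carrier_vec (m1 + m2)" and c: "c * c \<noteq> 1"
    and eq: "v + c \<cdot>\<^sub>v (J *\<^sub>v (D *\<^sub>v v)) = 0\<^sub>v (m1 + m2)"
  shows "v = 0\<^sub>v (m1 + m2)"
proof -
  define x where "x = J *\<^sub>v (D *\<^sub>v v)"
  have x: "x \<in> carrier_vec (m1 + m2)" unfolding x_def by simp
  have v_x: "v = (- c) \<cdot>\<^sub>v x"
  proof (rule eq_vecI)
    fix i assume "i < dim_vec ((- c) \<cdot>\<^sub>v x)"
    then have "i < m1 + m2" using x by simp
    moreover from this have "v $ i + c * x $ i = 0"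
      using arg_cong[OF eq, of "\<lambda>w. w $ i"] v x unfolding x_def by simp
    ultimately show "v $ i = ((- c) \<cdot>\<^sub>v x) $ i" using x by (simp add: add_eq_0_iff)
  qed (use v x in simp)
  have "x = J *\<^sub>v (D *\<^sub>v ((- c) \<cdot>\<^sub>v x))" using v_x unfolding x_def by simp
  also have "\<dots> = (- c) \<cdot>\<^sub>v (J *\<^sub>v (D *\<^sub>v x))"
    using x by (simp add: mult_mat_vec[OF carrier x] mult_mat_vec[OF jmat_carrier])
  also have "J *\<^sub>v (D *\<^sub>v x) = v" unfolding x_def D_J_D_mult_vec[OF v] using v by simp
  finally have x_v: "x = (- c) \<cdot>\<^sub>v v" .
  show ?thesis
  proof (rule eq_vecI)
    fix i assume "i < dim_vec (0\<^sub>v (m1 + m2) :: complex vec)"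
    then have i: "i < m1 + m2" by simp
    have "v $ i = c * c * v $ i"
      using arg_cong[OF v_x, of "\<lambda>w. w $ i"] arg_cong[OF x_v, of "\<lambda>w. w $ i"] i v x by simp
    then have "(1 - c * c) * v $ i = 0" by (simp add: algebra_simps)
    then show "v $ i = 0\<^sub>v (m1 + m2) $ i" using c i by simp
  qed (use v in simp)
qed

lemma mat_kernel_add_jmat_iff:
  "y \<in> mat_kernel (D + J) \<longleftrightarrow> y \<in> carrier_vec (m1 + m2) \<and> D *\<^sub>v y + J *\<^sub>v y = 0\<^sub>v (m1 + m2)"
  unfolding mat_kernel_def by (auto simp: add_mult_distrib_mat_vec[OF carrier jmat_carrier])

lemma J_D_minus_mem_kernel:
  assumes y: "y \<in> carrier_vec (m1 + m2)"
  shows "J *\<^sub>v (D *\<^sub>v y) - y \<in> mat_kernel (D + J)"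
proof -
  have JDy: "J *\<^sub>v (D *\<^sub>v y) \<in> carrier_vec (m1 + m2)" by simp
  have "D *\<^sub>v (J *\<^sub>v (D *\<^sub>v y) - y) = J *\<^sub>v y - D *\<^sub>v y"
    using mult_minus_distrib_mat_vec[OF carrier JDy y] D_J_D_mult_vec[OF y] by simp
  moreover have "J *\<^sub>v (J *\<^sub>v (D *\<^sub>v y) - y) = D *\<^sub>v y - J *\<^sub>v y"
    using mult_minus_distrib_mat_vec[OF jmat_carrier JDy y] by simp
  ultimately show ?thesis
    unfolding mat_kernel_add_jmat_iff using y by (auto intro!: eq_vecI)
qed

text \<open>\<open>y - w\<close> has zero lower half, so its \<open>j\<close>-form is its squared norm; and \<open>D + j\<close> has the same
  form at \<open>y - w\<close> as at \<open>w\<close>.\<close>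

lemma sqnorm_diff_le_qform_kernel:
  assumes y: "y \<in> mat_kernel (D + J)" and w: "w \<in> carrier_vec (m1 + m2)"
    and lower: "\<And>i. i < m2 \<Longrightarrow> w $ (m1 + i) = y $ (m1 + i)"
  shows "2 * Re (cinner (y - w) (y - w)) \<le> qform (D + J) w"
proof -
  have yc: "y \<in> carrier_vec (m1 + m2)" and Gy: "(D + J) *\<^sub>v y = 0\<^sub>v (m1 + m2)"
    using y unfolding mat_kernel_def by auto
  have G: "D + J \<in> carrier_mat (m1 + m2) (m1 + m2)" by simp
  have G_herm: "cadj (D + J) = D + J" using cadj_add[OF carrier jmat_carrier] hermitian by simp
  define u where "u = y - w"
  have u: "u \<in> carrier_vec (m1 + m2)" unfolding u_def using yc w by simp
  have "lower_sqnorm m1 m2 u = lower_sqnorm m1 m2 (0\<^sub>v (m1 + m2))"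
    by (rule lower_sqnorm_cong) (use lower yc w in \<open>simp add: u_def\<close>)
  then have "Re (cinner u u) = qform J u"
    using qform_jmat[OF u] Re_cinner_self_split[OF u] by (simp add: lower_sqnorm_def)
  also have "2 * qform J u \<le> qform (D + J) u"
    using qform_add[OF carrier jmat_carrier u] qform_jmat_le[OF u] by simp
  also have "qform (D + J) u = qform (D + J) w"
    unfolding u_def cinner_diff_kernel[OF G G_herm yc w Gy] ..
  finally show ?thesis unfolding u_def .
qed

lemma D_eq_J_on_J_D_plus:
  assumes y: "y \<in> carrier_vec (m1 + m2)"
  shows "D *\<^sub>v (J *\<^sub>v (D *\<^sub>v y) + y) = J *\<^sub>v (J *\<^sub>v (D *\<^sub>v y) + y)"
proof -
  have JDy: "J *\<^sub>v (D *\<^sub>v y) \<in> carrier_vec (m1 + m2)" by simp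
  have "D *\<^sub>v (J *\<^sub>v (D *\<^sub>v y) + y) = J *\<^sub>v y + D *\<^sub>v y"
    using mult_add_distrib_mat_vec[OF carrier JDy y] D_J_D_mult_vec[OF y] by simp
  moreover have "J *\<^sub>v (J *\<^sub>v (D *\<^sub>v y) + y) = D *\<^sub>v y + J *\<^sub>v y"
    using mult_add_distrib_mat_vec[OF jmat_carrier JDy y] by simp
  ultimately show ?thesis by (auto intro!: eq_vecI)
qed

lemma cinner_kernel_D_left:
  assumes r: "r \<in> mat_kernel (D + J)" and w: "w \<in> carrier_vec (m1 + m2)"
  shows "cinner (D *\<^sub>v r) w = - cinner (J *\<^sub>v r) w"
proof -
  have "D *\<^sub>v r = - (J *\<^sub>v r)"
    using r unfolding mat_kernel_add_jmat_iff by (simp add: add_eq_0_vec_iff)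
  then show ?thesis unfolding cinner_def by (simp add: sum_negf)
qed

lemma cinner_kernel_J_eigen:
  assumes r: "r \<in> mat_kernel (D + J)" and p: "p \<in> carrier_vec (m1 + m2)" and Dp: "D *\<^sub>v p = J *\<^sub>v p"
  shows "cinner r (J *\<^sub>v p) = 0"
proof -
  have rc: "r \<in> carrier_vec (m1 + m2)" using r unfolding mat_kernel_add_jmat_iff by simp
  have "cinner r (J *\<^sub>v p) = cinner (D *\<^sub>v r) p"
    using cinner_hermitian[OF carrier hermitian rc p] Dp by simp
  also have "\<dots> = - cinner r (J *\<^sub>v p)"
    using cinner_kernel_D_left[OF r p] cinner_hermitian[OF jmat_carrier cadj_jmat rc p] by simp
  finally show ?thesis by simp
qed

end

text \<open>\<open>r = j D' p - p\<close> lies in both kernels and is \<open>j\<close>-orthogonal to \<open>p\<close>, which forces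
  \<open>\<langle>r, D r\<rangle> = 0\<close>.\<close>

lemma mult_vec_eq_jmat_if_kernels_eq:
  assumes D: "admissible m1 m2 D" and D': "admissible m1 m2 D'"
    and ker: "mat_kernel (D + jmat m1 m2) = mat_kernel (D' + jmat m1 m2)"
    and p: "p \<in> carrier_vec (m1 + m2)" and Dp: "D *\<^sub>v p = jmat m1 m2 *\<^sub>v p"
  shows "D' *\<^sub>v p = jmat m1 m2 *\<^sub>v p"
proof -
  interpret D: admissible m1 m2 D by (rule D)
  interpret D': admissible m1 m2 D' by (rule D')
  let ?J = "jmat m1 m2"
  define r where "r = ?J *\<^sub>v (D' *\<^sub>v p) - p"
  have r: "r \<in> carrier_vec (m1 + m2)" unfolding r_def using p by simp
  have r_ker': "r \<in> mat_kernel (D' + ?J)" unfolding r_def by (rule D'.J_D_minus_mem_kernel[OF p])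
  then have r_ker: "r \<in> mat_kernel (D + ?J)" unfolding ker .
  have rJp: "cinner r (?J *\<^sub>v p) = 0" by (rule D.cinner_kernel_J_eigen[OF r_ker p Dp])
  have Jr: "?J *\<^sub>v r = D' *\<^sub>v p - ?J *\<^sub>v p"
    unfolding r_def using mult_minus_distrib_mat_vec[OF jmat_carrier _ p, of "?J *\<^sub>v (D' *\<^sub>v p)"] by simp
  have "cinner r (?J *\<^sub>v r) = cinner (D' *\<^sub>v r) p"
    unfolding Jr using cinner_diff_right[OF r _ _, of "D' *\<^sub>v p" "?J *\<^sub>v p"] rJp
      cinner_hermitian[OF D'.carrier D'.hermitian r p] by simp
  also have "\<dots> = - cinner r (?J *\<^sub>v p)"
    using D'.cinner_kernel_D_left[OF r_ker' p] cinner_hermitian[OF jmat_carrier cadj_jmat r p] by simp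
  finally have "qform D r = 0"
    using D.cinner_kernel_D_left[OF r_ker r] cinner_hermitian[OF D.carrier D.hermitian r r]
      cinner_hermitian[OF jmat_carrier cadj_jmat r r] rJp by simp
  then have "r = 0\<^sub>v (m1 + m2)" by (intro D.qform_nonpos_imp_zero[OF r]) simp
  then have "?J *\<^sub>v r = 0\<^sub>v (m1 + m2)" using mult_mat_vec_zero_vec[OF jmat_carrier] by simp
  then show ?thesis unfolding Jr by (simp add: diff_eq_0_vec_iff)
qed

text \<open>Write \<open>2 y = p - q\<close> with \<open>q = j D y - y\<close> in the kernel of \<open>D + j\<close> and \<open>p = j D y + y\<close>
  satisfying \<open>D p = j p\<close>.\<close>

lemma admissible_eq_if_kernels_eq:
  assumes D: "admissible m1 m2 D" and D': "admissible m1 m2 D'"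
    and ker: "mat_kernel (D + jmat m1 m2) = mat_kernel (D' + jmat m1 m2)"
  shows "D = D'"
proof (rule mat_eq_if_mult_vec_eq)
  interpret D: admissible m1 m2 D by (rule D)
  interpret D': admissible m1 m2 D' by (rule D')
  let ?J = "jmat m1 m2"
  fix y :: "complex vec" assume y: "y \<in> carrier_vec (m1 + m2)"
  define p where "p = ?J *\<^sub>v (D *\<^sub>v y) + y"
  define q where "q = ?J *\<^sub>v (D *\<^sub>v y) - y"
  have p: "p \<in> carrier_vec (m1 + m2)" and q: "q \<in> carrier_vec (m1 + m2)"
    unfolding p_def q_def using y by auto
  have "q \<in> mat_kernel (D' + ?J)" unfolding q_def ker[symmetric] by (rule D.J_D_minus_mem_kernel[OF y])
  then have D'q: "D' *\<^sub>v q = D *\<^sub>v q"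
    using D.J_D_minus_mem_kernel[OF y] unfolding q_def[symmetric]
      D.mat_kernel_add_jmat_iff D'.mat_kernel_add_jmat_iff
    by (simp add: add_eq_0_vec_iff)
  have Dp: "D *\<^sub>v p = ?J *\<^sub>v p" unfolding p_def by (rule D.D_eq_J_on_J_D_plus[OF y])
  have D'p: "D' *\<^sub>v p = D *\<^sub>v p"
    unfolding Dp by (rule mult_vec_eq_jmat_if_kernels_eq[OF D D' ker p Dp])
  have "p - q = y + y" unfolding p_def q_def using y by (auto intro!: eq_vecI)
  then have "D *\<^sub>v (y + y) = D' *\<^sub>v (y + y)"
    using D'p D'q mult_minus_distrib_mat_vec[OF D.carrier p q] mult_minus_distrib_mat_vec[OF D'.carrier p q]
    by simp
  then show "D *\<^sub>v y = D' *\<^sub>v y"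
    using mult_add_distrib_mat_vec[OF D.carrier y y] mult_add_distrib_mat_vec[OF D'.carrier y y]
    by (auto simp: vec_eq_iff)
qed (use D D' in \<open>auto simp: admissible_def\<close>)

section \<open>The fundamental solution\<close>

lemma fund_sol_cong: "(\<And>i. i < n \<Longrightarrow> C i = C' i) \<Longrightarrow> fund_sol m1 m2 C z n = fund_sol m1 m2 C' z n"
  by (induction n) auto

locale dirac_system =
  fixes m1 m2 :: nat and C :: "nat \<Rightarrow> complex mat"
  assumes potential: "dirac_potential m1 m2 C"
begin

sublocale potential_value: admissible m1 m2 "C k" for k
  by (rule dirac_potential_admissible[OF potential])

abbreviation W :: "complex \<Rightarrow> nat \<Rightarrow> complex mat" where
  "W \<equiv> fund_sol m1 m2 C"

lemma fund_sol_carrier [simp]: "W z k \<in> carrier_mat (m1 + m2) (m1 + m2)"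
  by (induction k) (auto intro!: mult_carrier_mat)

lemma fund_sol_dims [simp]: "dim_row (W z k) = m1 + m2" "dim_col (W z k) = m1 + m2"
  using carrier_matD[OF fund_sol_carrier] by auto

lemma fund_sol_Suc_mult_vec:
  assumes w: "w \<in> carrier_vec (m1 + m2)"
  shows "W z (Suc k) *\<^sub>v w = W z k *\<^sub>v w + (\<i> * z) \<cdot>\<^sub>v (jmat m1 m2 *\<^sub>v (C k *\<^sub>v (W z k *\<^sub>v w)))"
proof -
  let ?u = "W z k *\<^sub>v w"
  have u: "?u \<in> carrier_vec (m1 + m2)" by simp
  have JC: "jmat m1 m2 * C k \<in> carrier_mat (m1 + m2) (m1 + m2)"
    by (rule mult_carrier_mat[OF jmat_carrier potential_value.carrier])
  have "W z (Suc k) *\<^sub>v w = (1\<^sub>m (m1 + m2) + (\<i> * z) \<cdot>\<^sub>m (jmat m1 m2 * C k)) *\<^sub>v ?u"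
    using assoc_mult_mat_vec[OF add_carrier_mat[OF smult_carrier_mat[OF JC]] fund_sol_carrier w] by simp
  also have "\<dots> = ?u + (\<i> * z) \<cdot>\<^sub>v ((jmat m1 m2 * C k) *\<^sub>v ?u)"
    using u JC by (simp add: add_mult_distrib_mat_vec[of _ "m1 + m2" "m1 + m2"] smult_mat_mult_vec)
  finally show ?thesis using assoc_mult_mat_vec[OF jmat_carrier potential_value.carrier u] by simp
qed

lemma qform_jmat_fund_sol_Suc:
  assumes w: "w \<in> carrier_vec (m1 + m2)"
  shows "qform (jmat m1 m2) (W z (Suc k) *\<^sub>v w) =
    (1 + (cmod z)\<^sup>2) * qform (jmat m1 m2) (W z k *\<^sub>v w) - 2 * Im z * qform (C k) (W z k *\<^sub>v w)"
proof -
  have c1: "1 + cnj (\<i> * z) * (\<i> * z) = complex_of_real (1 + (cmod z)\<^sup>2)"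
    using cnj_mult_self[of "\<i> * z"] by (simp add: norm_mult)
  have c2: "\<i> * z + cnj (\<i> * z) = complex_of_real (- 2 * Im z)"
    by (simp add: complex_eq_iff)
  have u: "W z k *\<^sub>v w \<in> carrier_vec (m1 + m2)" by simp
  show ?thesis
    unfolding fund_sol_Suc_mult_vec[OF w]
      potential_value.cinner_transfer_step(2)[where k = k and c = "\<i> * z", OF u, unfolded c1 c2]
    by simp
qed

lemma fund_sol_mult_vec_eq_zero_imp:
  assumes v: "v \<in> carrier_vec (m1 + m2)" and z: "1 + z * z \<noteq> 0"
  shows "W z k *\<^sub>v v = 0\<^sub>v (m1 + m2) \<Longrightarrow> v = 0\<^sub>v (m1 + m2)"
proof (induction k)
  case 0 then show ?case using v by simp
next
  case (Suc k)
  have ne: "(\<i> * z) * (\<i> * z) \<noteq> 1"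
  proof
    assume "(\<i> * z) * (\<i> * z) = 1"
    then have "1 + z * z = 0" by (simp add: algebra_simps) (metis add_eq_0_iff minus_equation_iff)
    then show False using z by simp
  qed
  have eq: "W z k *\<^sub>v v + (\<i> * z) \<cdot>\<^sub>v (jmat m1 m2 *\<^sub>v (C k *\<^sub>v (W z k *\<^sub>v v))) = 0\<^sub>v (m1 + m2)"
    using Suc.prems unfolding fund_sol_Suc_mult_vec[OF v] .
  have "W z k *\<^sub>v v \<in> carrier_vec (m1 + m2)" by simp
  from potential_value.transfer_step_eq_zero_imp[OF this ne eq]
  have "W z k *\<^sub>v v = 0\<^sub>v (m1 + m2)" .
  then show ?case by (rule Suc.IH)
qed

end

section \<open>Weyl vectors\<close>

lemma qfun_pos: "0 < qfun z"
  unfolding qfun_def by (simp add: add_pos_nonneg)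

lemma qfun_mult: "qfun z * (1 + (cmod z)\<^sup>2) = 1"
proof -
  have "0 < 1 + (cmod z)\<^sup>2" by (simp add: add_pos_nonneg)
  then show ?thesis unfolding qfun_def by simp
qed

lemma incseq_le_tendsto_zero_imp_nonpos:
  fixes s t :: "nat \<Rightarrow> real"
  assumes "incseq s" and "\<And>k. s k \<le> t k" and "t \<longlonglongrightarrow> 0"
  shows "s k \<le> 0"
  using assms by (intro LIMSEQ_le_const[OF assms(3)]) (meson incseqD order_trans)

text \<open>The \<open>(m\<^sub>1 + m\<^sub>2) \<times> m\<^sub>2\<close> block matrix \<open>[\<phi>; I]\<close> of the Weyl series.\<close>

definition weyl_frame :: "nat \<Rightarrow> nat \<Rightarrow> complex mat \<Rightarrow> complex mat" where
  "weyl_frame m1 m2 F = four_block_mat F (0\<^sub>m m1 0) (1\<^sub>m m2) (0\<^sub>m m2 0)"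

lemma weyl_frame_carrier: "F \<in> carrier_mat m1 m2 \<Longrightarrow> weyl_frame m1 m2 F \<in> carrier_mat (m1 + m2) m2"
  unfolding weyl_frame_def by (metis four_block_carrier_mat one_carrier_mat zero_carrier_mat add_0_right)

lemma weyl_frame_mult_vec_lower:
  assumes F: "F \<in> carrier_mat m1 m2" and x: "x \<in> carrier_vec m2" and i: "i < m2"
  shows "(weyl_frame m1 m2 F *\<^sub>v x) $ (m1 + i) = x $ i"
proof -
  have i': "m1 + i < m1 + m2" using i by simp
  have "(weyl_frame m1 m2 F *\<^sub>v x) $ (m1 + i) = (\<Sum>b<m2. if b = i then x $ i else 0)"
    unfolding mult_mat_vec_index_sum[OF weyl_frame_carrier[OF F] x i'] using i
    by (intro sum.cong) (use F in \<open>auto simp: weyl_frame_def index_mat_four_block\<close>)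
  then show ?thesis using i by simp
qed

context dirac_system
begin

lemma weyl_term_carrier: "F \<in> carrier_mat m1 m2 \<Longrightarrow> weyl_term m1 m2 C F z k \<in> carrier_mat m2 m2"
  using weyl_frame_carrier[of F m1 m2]
  unfolding weyl_term_def weyl_frame_def[symmetric] Let_def carrier_mat_def by simp

lemma cinner_weyl_term:
  fixes z :: complex and k :: nat
  assumes F: "F \<in> carrier_mat m1 m2" and x: "x \<in> carrier_vec m2"
  defines "w \<equiv> W z k *\<^sub>v (weyl_frame m1 m2 F *\<^sub>v x)"
  shows "cinner x (weyl_term m1 m2 C F z k *\<^sub>v x) = qfun z ^ k * cinner w (C k *\<^sub>v w)"
proof -
  let ?P = "weyl_frame m1 m2 F" and ?W = "W z k"
  have P: "?P \<in> carrier_mat (m1 + m2) m2" by (rule weyl_frame_carrier[OF F])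
  have cP: "cadj ?P \<in> carrier_mat m2 (m1 + m2)" using P by simp
  have cW: "cadj ?W \<in> carrier_mat (m1 + m2) (m1 + m2)" by simp
  have M1: "cadj ?P * cadj ?W \<in> carrier_mat m2 (m1 + m2)" by (rule mult_carrier_mat[OF cP cW])
  have M2: "cadj ?P * cadj ?W * C k \<in> carrier_mat m2 (m1 + m2)" by (rule mult_carrier_mat[OF M1]) simp
  have M3: "cadj ?P * cadj ?W * C k * ?W \<in> carrier_mat m2 (m1 + m2)" by (rule mult_carrier_mat[OF M2]) simp
  have M4: "cadj ?P * cadj ?W * C k * ?W * ?P \<in> carrier_mat m2 m2" by (rule mult_carrier_mat[OF M3 P])
  have Px: "?P *\<^sub>v x \<in> carrier_vec (m1 + m2)" using P by simp
  have w: "w \<in> carrier_vec (m1 + m2)" unfolding w_def by simp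
  have Cw: "C k *\<^sub>v w \<in> carrier_vec (m1 + m2)" by simp
  have "weyl_term m1 m2 C F z k = complex_of_real (qfun z ^ k) \<cdot>\<^sub>m (cadj ?P * cadj ?W * C k * ?W * ?P)"
    unfolding weyl_term_def weyl_frame_def Let_def ..
  then have "cinner x (weyl_term m1 m2 C F z k *\<^sub>v x) =
      qfun z ^ k * cinner x ((cadj ?P * cadj ?W * C k * ?W * ?P) *\<^sub>v x)"
    using carrier_matD[OF M4] carrier_vecD[OF x] by (simp add: smult_mat_mult_vec[OF M4 x] cinner_smult_right)
  also have "(cadj ?P * cadj ?W * C k * ?W * ?P) *\<^sub>v x = (cadj ?P * cadj ?W * C k) *\<^sub>v w"
    unfolding w_def assoc_mult_mat_vec[OF M3 P x] assoc_mult_mat_vec[OF M2 fund_sol_carrier Px] ..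
  also have "\<dots> = cadj ?P *\<^sub>v (cadj ?W *\<^sub>v (C k *\<^sub>v w))"
    unfolding assoc_mult_mat_vec[OF M1 potential_value.carrier w] assoc_mult_mat_vec[OF cP cW Cw] ..
  also have "cinner x \<dots> = cinner w (C k *\<^sub>v w)"
    using cinner_mult_mat_vec_right[OF cP x, of "cadj ?W *\<^sub>v (C k *\<^sub>v w)"]
      cinner_mult_mat_vec_right[OF cW Px Cw] by (simp add: w_def)
  finally show ?thesis .
qed

lemma summable_qform_weyl:
  assumes weyl: "is_weyl_function m1 m2 C \<phi>" and z: "Im z < 0" and x: "x \<in> carrier_vec m2"
  shows "summable (\<lambda>k. qfun z ^ k * qform (C k) (W z k *\<^sub>v (weyl_frame m1 m2 (\<phi> z) *\<^sub>v x)))"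
proof -
  have F: "\<phi> z \<in> carrier_mat m1 m2"
    and S: "\<And>a b. a < m2 \<Longrightarrow> b < m2 \<Longrightarrow> summable (\<lambda>k. weyl_term m1 m2 C (\<phi> z) z k $$ (a, b))"
    using weyl z unfolding is_weyl_function_def by auto
  have "summable (\<lambda>k. \<Sum>a<m2. \<Sum>b<m2. cnj (x $ a) * weyl_term m1 m2 C (\<phi> z) z k $$ (a, b) * x $ b)"
    by (intro summable_sum summable_mult summable_mult2 S) auto
  then have "summable (\<lambda>k. cinner x (weyl_term m1 m2 C (\<phi> z) z k *\<^sub>v x))"
    unfolding cinner_mult_mat_vec_expand[OF weyl_term_carrier[OF F] x] .
  from summable_Re[OF this] show ?thesis
    unfolding cinner_weyl_term[OF F x] by simp
qed

lemma qform_jmat_nonpos_if_summable: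
  assumes z: "Im z < 0" and w: "w \<in> carrier_vec (m1 + m2)"
    and summable: "summable (\<lambda>k. qfun z ^ k * qform (C k) (W z k *\<^sub>v w))"
  shows "qform (jmat m1 m2) (W z k *\<^sub>v w) \<le> 0"
proof -
  define s where "s k = qfun z ^ k * qform (jmat m1 m2) (W z k *\<^sub>v w)" for k
  define t where "t k = qfun z ^ k * qform (C k) (W z k *\<^sub>v w)" for k
  have q: "0 < qfun z" by (rule qfun_pos)
  have "incseq s"
  proof (rule incseq_SucI)
    fix k
    have "s (Suc k) = qfun z ^ k * (qfun z * (1 + (cmod z)\<^sup>2)) * qform (jmat m1 m2) (W z k *\<^sub>v w)
        - 2 * Im z * qfun z * t k"
      unfolding s_def t_def qform_jmat_fund_sol_Suc[OF w] by (simp add: algebra_simps)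
    also have "\<dots> = s k - 2 * Im z * qfun z * t k"
      unfolding qfun_mult s_def by simp
    finally have "s (Suc k) = s k - 2 * Im z * qfun z * t k" .
    moreover have "0 \<le> t k"
      unfolding t_def using q potential_value.qform_nonneg[of "W z k *\<^sub>v w" k] by simp
    ultimately show "s k \<le> s (Suc k)"
      using z q by (simp add: mult_nonneg_nonneg mult_nonpos_nonneg)
  qed
  moreover have "s k \<le> t k" for k
    unfolding s_def t_def using q potential_value.qform_jmat_le[of "W z k *\<^sub>v w" k]
    by (simp add: mult_left_mono)
  moreover have "t \<longlonglongrightarrow> 0"
    unfolding t_def by (rule summable_LIMSEQ_zero[OF summable])
  ultimately have "s k \<le> 0" by (rule incseq_le_tendsto_zero_imp_nonpos)
  then show ?thesis using zero_less_power[OF q, of k] unfolding s_def by (simp add: mult_le_0_iff)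
qed

lemma qform_jmat_weyl_nonpos:
  assumes weyl: "is_weyl_function m1 m2 C \<phi>" and z: "Im z < 0" and x: "x \<in> carrier_vec m2"
  shows "qform (jmat m1 m2) (W z k *\<^sub>v (weyl_frame m1 m2 (\<phi> z) *\<^sub>v x)) \<le> 0"
proof (rule qform_jmat_nonpos_if_summable[OF z _ summable_qform_weyl[OF weyl z x]])
  have "\<phi> z \<in> carrier_mat m1 m2" using weyl z unfolding is_weyl_function_def by auto
  then show "weyl_frame m1 m2 (\<phi> z) *\<^sub>v x \<in> carrier_vec (m1 + m2)"
    using mult_mat_vec_carrier[OF weyl_frame_carrier x] by simp
qed

lemma weyl_vector_transfer_ineq:
  fixes n :: nat
  assumes weyl: "is_weyl_function m1 m2 C \<phi>" and z: "Im z < 0" and x: "x \<in> carrier_vec m2"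
  defines "w \<equiv> W z n *\<^sub>v (weyl_frame m1 m2 (\<phi> z) *\<^sub>v x)"
  shows "(1 + (cmod z)\<^sup>2) * qform (jmat m1 m2) w - 2 * Im z * qform (C n) w \<le> 0"
proof -
  have "\<phi> z \<in> carrier_mat m1 m2" using weyl z unfolding is_weyl_function_def by auto
  then have Px: "weyl_frame m1 m2 (\<phi> z) *\<^sub>v x \<in> carrier_vec (m1 + m2)"
    using mult_mat_vec_carrier[OF weyl_frame_carrier x] by simp
  show ?thesis
    using qform_jmat_weyl_nonpos[OF weyl z x, of "Suc n"] unfolding qform_jmat_fund_sol_Suc[OF Px] w_def .
qed

text \<open>A \<open>j\<close>-nonpositive vector with zero lower half vanishes, and \<open>W\<^sub>n\<close> is invertible.\<close>

lemma weyl_vector_eq_zero_if_lower_zero: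
  assumes weyl: "is_weyl_function m1 m2 C \<phi>" and z: "Im z < 0" and z1: "1 + z * z \<noteq> 0"
    and x: "x \<in> carrier_vec m2"
    and lower: "\<And>i. i < m2 \<Longrightarrow> (W z n *\<^sub>v (weyl_frame m1 m2 (\<phi> z) *\<^sub>v x)) $ (m1 + i) = 0"
  shows "x = 0\<^sub>v m2"
proof -
  let ?P = "weyl_frame m1 m2 (\<phi> z)"
  have F: "\<phi> z \<in> carrier_mat m1 m2" using weyl z unfolding is_weyl_function_def by auto
  have Px: "?P *\<^sub>v x \<in> carrier_vec (m1 + m2)" using mult_mat_vec_carrier[OF weyl_frame_carrier[OF F] x] .
  define w where "w = W z n *\<^sub>v (?P *\<^sub>v x)"
  have w: "w \<in> carrier_vec (m1 + m2)" unfolding w_def by simp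
  have "lower_sqnorm m1 m2 w = lower_sqnorm m1 m2 (0\<^sub>v (m1 + m2))"
    by (rule lower_sqnorm_cong) (use lower in \<open>simp add: w_def\<close>)
  then have "lower_sqnorm m1 m2 w = 0" by (simp add: lower_sqnorm_def)
  moreover have "qform (jmat m1 m2) w \<le> 0" unfolding w_def by (rule qform_jmat_weyl_nonpos[OF weyl z x])
  ultimately have "Re (cinner w w) \<le> 0"
    using qform_jmat[OF w] Re_cinner_self_split[OF w] by simp
  then have "W z n *\<^sub>v (?P *\<^sub>v x) = 0\<^sub>v (m1 + m2)"
    using cinner_self_nonpos_imp_zero[of w] w unfolding w_def by simp
  then have Px0: "?P *\<^sub>v x = 0\<^sub>v (m1 + m2)" by (rule fund_sol_mult_vec_eq_zero_imp[OF Px z1])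
  show ?thesis
  proof (rule eq_vecI)
    fix i assume "i < dim_vec (0\<^sub>v m2 :: complex vec)"
    then have i: "i < m2" by simp
    then show "x $ i = 0\<^sub>v m2 $ i"
      using weyl_frame_mult_vec_lower[OF F x i] Px0 by simp
  qed (use x in simp)
qed

lemma weyl_vector_lower_surj:
  assumes weyl: "is_weyl_function m1 m2 C \<phi>" and z: "Im z < 0" and z1: "1 + z * z \<noteq> 0"
    and y: "y \<in> carrier_vec (m1 + m2)"
  obtains x where "x \<in> carrier_vec m2"
    and "\<And>i. i < m2 \<Longrightarrow> (W z n *\<^sub>v (weyl_frame m1 m2 (\<phi> z) *\<^sub>v x)) $ (m1 + i) = y $ (m1 + i)"
proof -
  let ?P = "weyl_frame m1 m2 (\<phi> z)"
  have F: "\<phi> z \<in> carrier_mat m1 m2" using weyl z unfolding is_weyl_function_def by auto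
  have P: "?P \<in> carrier_mat (m1 + m2) m2" by (rule weyl_frame_carrier[OF F])
  have WP: "W z n * ?P \<in> carrier_mat (m1 + m2) m2" by (rule mult_carrier_mat[OF fund_sol_carrier P])
  define B where "B = mat m2 m2 (\<lambda>(a, b). (W z n * ?P) $$ (m1 + a, b))"
  have B: "B \<in> carrier_mat m2 m2" unfolding B_def by simp
  have Bx: "(B *\<^sub>v x) $ a = (W z n *\<^sub>v (?P *\<^sub>v x)) $ (m1 + a)" if x: "x \<in> carrier_vec m2" and a: "a < m2" for x a
  proof -
    have "m1 + a < m1 + m2" using a by simp
    then have "(W z n *\<^sub>v (?P *\<^sub>v x)) $ (m1 + a) = (\<Sum>b<m2. (W z n * ?P) $$ (m1 + a, b) * x $ b)"
      unfolding assoc_mult_mat_vec[OF fund_sol_carrier P x, symmetric] by (rule mult_mat_vec_index_sum[OF WP x])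
    moreover have "(B *\<^sub>v x) $ a = (\<Sum>b<m2. B $$ (a, b) * x $ b)" by (rule mult_mat_vec_index_sum[OF B x a])
    ultimately show ?thesis using a unfolding B_def by simp
  qed
  have "\<exists>x \<in> carrier_vec m2. B *\<^sub>v x = vec m2 (\<lambda>i. y $ (m1 + i))"
  proof (rule mult_mat_vec_surj_if_inj[OF B])
    fix x :: "complex vec" assume x: "x \<in> carrier_vec m2" and "B *\<^sub>v x = 0\<^sub>v m2"
    then show "x = 0\<^sub>v m2"
      using Bx[OF x] by (intro weyl_vector_eq_zero_if_lower_zero[OF weyl z z1 x, where n = n]) (metis index_zero_vec(1))
  qed simp
  then show ?thesis using Bx that by fastforce
qed

end

text \<open>\<open>w\<close> is nearly in both kernels, and \<open>y - w\<close> is small because \<open>w\<close> is nearly in the kernel of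
  \<open>D' + j\<close>; the parallelogram law then bounds the form of \<open>D + j\<close> at \<open>y = w + (y - w)\<close>.\<close>

lemma qform_kernel_estimate:
  fixes t :: real
  assumes D: "admissible m1 m2 D" and D': "admissible m1 m2 D'"
    and y: "y \<in> mat_kernel (D' + jmat m1 m2)" and w: "w \<in> carrier_vec (m1 + m2)"
    and lower: "\<And>i. i < m2 \<Longrightarrow> w $ (m1 + i) = y $ (m1 + i)"
    and neg: "qform (jmat m1 m2) w \<le> 0" and t: "0 \<le> t"
    and ineq: "(1 + t\<^sup>2) * qform (jmat m1 m2) w + 2 * t * qform D w \<le> 0"
    and ineq': "(1 + t\<^sup>2) * qform (jmat m1 m2) w + 2 * t * qform D' w \<le> 0"
  shows "qform (D + jmat m1 m2) y \<le> (t - 1)\<^sup>2 *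
    ((2 * (2 * entry_norm D + 1) + entry_norm (D + jmat m1 m2) * (2 * entry_norm D' + 1)) * lower_sqnorm m1 m2 y)"
proof -
  interpret D: admissible m1 m2 D by (rule D)
  interpret D': admissible m1 m2 D' by (rule D')
  let ?J = "jmat m1 m2"
  let ?G = "D + ?J"
  define L where "L = lower_sqnorm m1 m2 y"
  define e where "e = (t - 1)\<^sup>2"
  have yc: "y \<in> carrier_vec (m1 + m2)" using y unfolding mat_kernel_def by auto
  have G: "?G \<in> carrier_mat (m1 + m2) (m1 + m2)" by simp
  have Lw: "lower_sqnorm m1 m2 w = L" unfolding L_def by (rule lower_sqnorm_cong[OF lower])
  note near = D.qform_add_jmat_le_lower[OF w t neg ineq] D'.qform_add_jmat_le_lower[OF w t neg ineq']
  define u where "u = y - w"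
  have u: "u \<in> carrier_vec (m1 + m2)" unfolding u_def using yc w by simp
  have u_small: "2 * Re (cinner u u) \<le> e * ((2 * entry_norm D' + 1) * L)"
    using D'.sqnorm_diff_le_qform_kernel[OF y w lower] near(2) unfolding u_def Lw e_def by linarith
  have "y = w + u" unfolding u_def using yc w by (auto simp: vec_eq_iff)
  then have "qform ?G y + qform ?G (w - u) = 2 * qform ?G w + 2 * qform ?G u"
    using arg_cong[OF cinner_parallelogram[OF G w u], of Re] by simp
  moreover have "0 \<le> qform ?G (w - u)"
    using D.qform_add_jmat_nonneg[of "w - u"] qform_add[OF D.carrier jmat_carrier, of "w - u"] w u by simp
  moreover have "qform ?G u \<le> entry_norm ?G * Re (cinner u u)"
    using abs_qform_le[OF G u] by simp
  moreover have "entry_norm ?G * (2 * Re (cinner u u)) \<le> entry_norm ?G * (e * ((2 * entry_norm D' + 1) * L))"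
    using u_small entry_norm_nonneg by (rule mult_left_mono)
  ultimately show ?thesis
    using near(1) unfolding Lw L_def[symmetric] e_def[symmetric] by (simp add: algebra_simps)
qed

lemma nonpos_if_le_sq_mult:
  fixes Q K :: real
  assumes "\<And>d. 0 < d \<Longrightarrow> Q \<le> d\<^sup>2 * K"
  shows "Q \<le> 0"
proof -
  have "((\<lambda>d. d\<^sup>2 * K) \<longlongrightarrow> 0\<^sup>2 * K) (at_right 0)" by (intro tendsto_intros)
  moreover have "\<forall>\<^sub>F d in at_right 0. Q \<le> d\<^sup>2 * K"
    using eventually_at_right_less[of 0] by eventually_elim (rule assms)
  ultimately show ?thesis by (intro tendsto_lowerbound) auto
qed

lemma exists_weyl_vector_with_lower:
  fixes t :: real
  assumes C: "dirac_potential m1 m2 C" and C': "dirac_potential m1 m2 C'"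
    and weyl: "is_weyl_function m1 m2 C \<phi>" and weyl': "is_weyl_function m1 m2 C' \<phi>"
    and eq: "\<And>z. fund_sol m1 m2 C z n = fund_sol m1 m2 C' z n"
    and y: "y \<in> carrier_vec (m1 + m2)" and t: "1 < t"
  obtains w where "w \<in> carrier_vec (m1 + m2)" and "\<And>i. i < m2 \<Longrightarrow> w $ (m1 + i) = y $ (m1 + i)"
    and "qform (jmat m1 m2) w \<le> 0"
    and "(1 + t\<^sup>2) * qform (jmat m1 m2) w + 2 * t * qform (C n) w \<le> 0"
    and "(1 + t\<^sup>2) * qform (jmat m1 m2) w + 2 * t * qform (C' n) w \<le> 0"
proof -
  interpret S: dirac_system m1 m2 C by (rule dirac_system.intro[OF C])
  interpret S': dirac_system m1 m2 C' by (rule dirac_system.intro[OF C'])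
  define z where "z = - (\<i> * complex_of_real t)"
  have z: "Im z = - t" "cmod z = t" unfolding z_def using t by (simp_all add: norm_mult)
  then have z_lower: "Im z < 0" using t by simp
  have "1 + z * z = complex_of_real (1 - t * t)" unfolding z_def by (simp add: complex_eq_iff)
  moreover have "1 - t * t \<noteq> 0" using less_1_mult[OF t t] by simp
  ultimately have z_sq: "1 + z * z \<noteq> 0" by (metis of_real_eq_0_iff)
  obtain x where x: "x \<in> carrier_vec m2"
    and lower: "\<And>i. i < m2 \<Longrightarrow> (S.W z n *\<^sub>v (weyl_frame m1 m2 (\<phi> z) *\<^sub>v x)) $ (m1 + i) = y $ (m1 + i)"
    using S.weyl_vector_lower_surj[OF weyl z_lower z_sq y, where n = n] by blast
  show ?thesis
  proof
    show "S.W z n *\<^sub>v (weyl_frame m1 m2 (\<phi> z) *\<^sub>v x) \<in> carrier_vec (m1 + m2)" by simp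
    show "qform (jmat m1 m2) (S.W z n *\<^sub>v (weyl_frame m1 m2 (\<phi> z) *\<^sub>v x)) \<le> 0"
      by (rule S.qform_jmat_weyl_nonpos[OF weyl z_lower x])
    show "(1 + t\<^sup>2) * qform (jmat m1 m2) (S.W z n *\<^sub>v (weyl_frame m1 m2 (\<phi> z) *\<^sub>v x))
        + 2 * t * qform (C n) (S.W z n *\<^sub>v (weyl_frame m1 m2 (\<phi> z) *\<^sub>v x)) \<le> 0"
      using S.weyl_vector_transfer_ineq[OF weyl z_lower x, of n] z by simp
    show "(1 + t\<^sup>2) * qform (jmat m1 m2) (S.W z n *\<^sub>v (weyl_frame m1 m2 (\<phi> z) *\<^sub>v x))
        + 2 * t * qform (C' n) (S.W z n *\<^sub>v (weyl_frame m1 m2 (\<phi> z) *\<^sub>v x)) \<le> 0"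
      using S'.weyl_vector_transfer_ineq[OF weyl' z_lower x, of n] z unfolding eq by simp
  qed (rule lower)
qed

lemma kernel_subset_if_fund_sol_eq:
  assumes C: "dirac_potential m1 m2 C" and C': "dirac_potential m1 m2 C'"
    and weyl: "is_weyl_function m1 m2 C \<phi>" and weyl': "is_weyl_function m1 m2 C' \<phi>"
    and eq: "\<And>z. fund_sol m1 m2 C z n = fund_sol m1 m2 C' z n"
  shows "mat_kernel (C' n + jmat m1 m2) \<subseteq> mat_kernel (C n + jmat m1 m2)"
proof
  interpret C: admissible m1 m2 "C n" by (rule dirac_potential_admissible[OF C])
  interpret C': admissible m1 m2 "C' n" by (rule dirac_potential_admissible[OF C'])
  fix y assume y: "y \<in> mat_kernel (C' n + jmat m1 m2)"
  have yc: "y \<in> carrier_vec (m1 + m2)" using y unfolding mat_kernel_def by auto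
  define K where "K = (2 * (2 * entry_norm (C n) + 1) + entry_norm (C n + jmat m1 m2) * (2 * entry_norm (C' n) + 1))
    * lower_sqnorm m1 m2 y"
  have "qform (C n + jmat m1 m2) y \<le> d\<^sup>2 * K" if d: "0 < d" for d
  proof -
    have t: "1 < 1 + d" using d by simp
    obtain w where "w \<in> carrier_vec (m1 + m2)" "\<And>i. i < m2 \<Longrightarrow> w $ (m1 + i) = y $ (m1 + i)"
      "qform (jmat m1 m2) w \<le> 0"
      "(1 + (1 + d)\<^sup>2) * qform (jmat m1 m2) w + 2 * (1 + d) * qform (C n) w \<le> 0"
      "(1 + (1 + d)\<^sup>2) * qform (jmat m1 m2) w + 2 * (1 + d) * qform (C' n) w \<le> 0"
      using exists_weyl_vector_with_lower[OF C C' weyl weyl' eq yc t] by blast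
    from qform_kernel_estimate[OF C.admissible_axioms C'.admissible_axioms y this(1,2,3) _ this(4,5)]
    show ?thesis using d unfolding K_def by simp
  qed
  then have "qform (C n) y + qform (jmat m1 m2) y \<le> 0"
    using nonpos_if_le_sq_mult qform_add[OF C.carrier jmat_carrier yc] by metis
  then show "y \<in> mat_kernel (C n + jmat m1 m2)"
    using C.qform_add_jmat_nonpos_imp[OF yc] yc unfolding C.mat_kernel_add_jmat_iff by simp
qed

theorem theorem2p3:
  fixes m1 m2 :: nat and C C' :: "nat \<Rightarrow> complex mat" and \<phi> :: "complex \<Rightarrow> complex mat"
  assumes "m1 \<noteq> 0" and "m2 \<noteq> 0"
    and "dirac_potential m1 m2 C" and "dirac_potential m1 m2 C'"
    and "is_weyl_function m1 m2 C \<phi>" and "is_weyl_function m1 m2 C' \<phi>"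
  shows "C = C'"
proof
  fix n show "C n = C' n"
  proof (induction n rule: less_induct)
    case (less n)
    then have eq: "fund_sol m1 m2 C z n = fund_sol m1 m2 C' z n" for z
      by (intro fund_sol_cong) simp
    have "mat_kernel (C n + jmat m1 m2) = mat_kernel (C' n + jmat m1 m2)"
      using kernel_subset_if_fund_sol_eq[OF assms(3-6) eq]
        kernel_subset_if_fund_sol_eq[OF assms(4,3,6,5) eq[symmetric]] by blast
    then show ?case
      by (rule admissible_eq_if_kernels_eq[OF dirac_potential_admissible dirac_potential_admissible, OF assms(3,4)])
  qed
qed

end
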